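(* Let $T$ be a tree and let $T'\subseteq T$ be a nonempty subset which is open and connected. Then (1) $\chi_T(T')\le2$; (2) $\chi_T(T')=2$ if and only if $T'=T$; (3) $\chi_T(T')=1$ if and only if $T'$ is a branch of $T$.
   Context: A tree $T$ is a finite connected graph without cycles, with vertex set $V$ and edge set $E$ (edges are $2$-element subsets of $V$), regarded as the set $V\sqcup E$, with the topology whose closed sets are the sub-graphs (subsets containing both endpoints of each edge they contain). For a vertex $v$, $E_v$ is the set of edges containing $v$, $\mathrm{val}(v)=\mathrm{card}\,E_v$, $\chi_T(v):=2-\mathrm{val}(v)$, and for a subset $T'$, $\chi_T(T'):=\sum_{v\in V\cap T'}\chi_T(v)$. A branch of $T$ is a set $B_v(e)$, for a vertex $v$ and $e\in E_v$, defined as the connected component of $T\setminus\{v\}$ containing $e$. *)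

theory Defs
  imports "HOL-Analysis.Analysis"
begin

definition fin_graph :: "'a set \<Rightarrow> 'a set set \<Rightarrow> bool" where
  "fin_graph V E \<longleftrightarrow> finite V \<and> (\<forall>e\<in>E. \<exists>u v. u \<in> V \<and> v \<in> V \<and> u \<noteq> v \<and> e = {u, v})"

definition graph_connected :: "'a set \<Rightarrow> 'a set set \<Rightarrow> bool" where
  "graph_connected V E \<longleftrightarrow>
     V \<noteq> {} \<and> (\<forall>u\<in>V. \<forall>v\<in>V. (u, v) \<in> {(x, y). {x, y} \<in> E}\<^sup>*)"

definition is_cycle :: "'a set set \<Rightarrow> 'a list \<Rightarrow> bool" where
  "is_cycle E vs \<longleftrightarrow> length vs \<ge> 3 \<and> distinct vs \<and>
     (\<forall>i. Suc i < length vs \<longrightarrow> {vs ! i, vs ! Suc i} \<in> E) \<and> {last vs, hd vs} \<in> E"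

definition is_tree :: "'a set \<Rightarrow> 'a set set \<Rightarrow> bool" where
  "is_tree V E \<longleftrightarrow> fin_graph V E \<and> graph_connected V E \<and> (\<nexists>vs. is_cycle E vs)"

text \<open>The tree as the set V \<squnion> E (vertices tagged Inl, edges tagged Inr).\<close>
definition tree_points :: "'a set \<Rightarrow> 'a set set \<Rightarrow> ('a + 'a set) set" where
  "tree_points V E = Inl ` V \<union> Inr ` E"

definition is_subgraph :: "('a + 'a set) set \<Rightarrow> bool" where
  "is_subgraph S \<longleftrightarrow> (\<forall>e. Inr e \<in> S \<longrightarrow> (\<forall>v\<in>e. Inl v \<in> S))"

definition tree_topology :: "'a set \<Rightarrow> 'a set set \<Rightarrow> ('a + 'a set) topology" where
  "tree_topology V E =
     topology (\<lambda>U. U \<subseteq> tree_points V E \<and> is_subgraph (tree_points V E - U))"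

definition valence :: "'a set set \<Rightarrow> 'a \<Rightarrow> nat" where
  "valence E v = card {e \<in> E. v \<in> e}"

definition chi_v :: "'a set set \<Rightarrow> 'a \<Rightarrow> int" where
  "chi_v E v = 2 - int (valence E v)"

definition chi :: "'a set \<Rightarrow> 'a set set \<Rightarrow> ('a + 'a set) set \<Rightarrow> int" where
  "chi V E S = (\<Sum>v \<in> {v \<in> V. Inl v \<in> S}. chi_v E v)"

definition branch :: "'a set \<Rightarrow> 'a set set \<Rightarrow> 'a \<Rightarrow> 'a set \<Rightarrow> ('a + 'a set) set" where
  "branch V E v e = connected_component_of_set
     (subtopology (tree_topology V E) (tree_points V E - {Inl v})) (Inr e)"

definition is_branch :: "'a set \<Rightarrow> 'a set set \<Rightarrow> ('a + 'a set) set \<Rightarrow> bool" where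
  "is_branch V E S \<longleftrightarrow> (\<exists>v\<in>V. \<exists>e\<in>E. v \<in> e \<and> S = branch V E v e)"

end

theory Submission
  imports Defs
begin

text \<open>
  Let \<open>W\<close> be the set of vertices of \<open>T'\<close>. Openness puts every edge at a vertex of \<open>W\<close> into
  \<open>T'\<close>, and connectedness makes \<open>W\<close> span a subtree whose edges \<open>F\<close> are those with both
  ends in \<open>W\<close>, so \<open>|F| = |W| - 1\<close>. Counting incidences gives
  \<open>\<Sum>v\<in>W. val v = 2|F| + |\<partial>|\<close>, where \<open>\<partial>\<close> is the set of edges with exactly one end in \<open>W\<close>;
  hence \<open>\<chi>(T') = 2|W| - 2|F| - |\<partial>| = 2 - |\<partial>|\<close>.
  Now \<open>\<partial> = {}\<close> exactly when \<open>W = V\<close>, i.e. \<open>T' = T\<close>. If \<open>\<partial> = {e}\<close> with \<open>e = {w, v}\<close>,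
  \<open>v \<notin> W\<close>, then \<open>T' \<union> {v}\<close> is closed, so \<open>T'\<close> is clopen and connected in \<open>T - {v}\<close>, i.e. it
  is the branch \<open>B\<^sub>v(e)\<close>; conversely, a second boundary edge of \<open>B\<^sub>v(e)\<close> must end at \<open>v\<close>
  and would close a cycle through \<open>e\<close>. If \<open>W = {}\<close>, then \<open>T'\<close> is a single edge and
  \<open>\<chi>(T') = 0\<close>.
\<close>

abbreviation adj :: "'a set set \<Rightarrow> ('a \<times> 'a) set" where
  "adj F \<equiv> {(x, y). {x, y} \<in> F}"

lemma adj_rtrancl_sym: "(x, y) \<in> (adj F)\<^sup>* \<Longrightarrow> (y, x) \<in> (adj F)\<^sup>*"
proof -
  have "sym (adj F)" by (auto simp: sym_def insert_commute)
  then have "sym ((adj F)\<^sup>*)" by (rule sym_rtrancl)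
  then show "(x, y) \<in> (adj F)\<^sup>* \<Longrightarrow> (y, x) \<in> (adj F)\<^sup>*" by (rule symD)
qed

lemma adj_rtrancl_mono: "F \<subseteq> G \<Longrightarrow> (x, y) \<in> (adj F)\<^sup>* \<Longrightarrow> (x, y) \<in> (adj G)\<^sup>*"
  by (erule rtrancl_mono[THEN subsetD, rotated]) auto

definition graph_component :: "'a set set \<Rightarrow> 'a \<Rightarrow> 'a set" where
  "graph_component F a = {u. (a, u) \<in> (adj F)\<^sup>*}"

lemma graph_component_edge:
  "{x, y} \<in> F \<Longrightarrow> x \<in> graph_component F a \<Longrightarrow> y \<in> graph_component F a"
  unfolding graph_component_def by (auto intro: rtrancl_into_rtrancl)

lemma graph_component_subset:
  assumes "\<forall>f\<in>F. f \<subseteq> W" "a \<in> W"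
  shows "graph_component F a \<subseteq> W"
proof
  fix u assume "u \<in> graph_component F a"
  then have "(a, u) \<in> (adj F)\<^sup>*" by (simp add: graph_component_def)
  then show "u \<in> W" by induction (use assms in auto)
qed

lemma graph_connected_component:
  "graph_connected (graph_component F a) {g \<in> F. g \<subseteq> graph_component F a}"
proof -
  let ?C = "graph_component F a" and ?G = "{g \<in> F. g \<subseteq> graph_component F a}"
  have from_a: "(a, u) \<in> (adj ?G)\<^sup>*" if "u \<in> ?C" for u
  proof -
    have "(a, u) \<in> (adj F)\<^sup>*" using that by (simp add: graph_component_def)
    then show ?thesis
    proof (induction rule: rtrancl_induct)
      case (step y z)
      then have "{y, z} \<in> ?G" by (auto simp: graph_component_def intro: rtrancl_into_rtrancl)
      with step.IH show ?case by (auto intro: rtrancl_into_rtrancl)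
    qed simp
  qed
  have "a \<in> ?C" by (simp add: graph_component_def)
  then show ?thesis
    unfolding graph_connected_def using from_a by (blast intro: adj_rtrancl_sym rtrancl_trans)
qed

lemma adj_rtrancl_Diff_edge:
  assumes "(a, u) \<in> (adj F)\<^sup>*"
  shows "(a, u) \<in> (adj (F - {{a, b}}))\<^sup>* \<or> (b, u) \<in> (adj (F - {{a, b}}))\<^sup>*"
  using assms
proof (induction rule: rtrancl_induct)
  case (step y z)
  show ?case
  proof (cases "{y, z} = {a, b}")
    case True
    then have "z = a \<or> z = b" by blast
    then show ?thesis by auto
  next
    case False
    with step show ?thesis by (auto intro: rtrancl_into_rtrancl)
  qed
qed simp

definition forest :: "'a set set \<Rightarrow> bool" where
  "forest F \<longleftrightarrow> (\<forall>a b. {a, b} \<in> F \<longrightarrow> a \<noteq> b \<longrightarrow> (a, b) \<notin> (adj (F - {{a, b}}))\<^sup>*)"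

lemma forest_subset: "forest G \<Longrightarrow> F \<subseteq> G \<Longrightarrow> forest F"
  unfolding forest_def
proof (intro allI impI notI)
  fix a b
  assume "\<forall>a b. {a, b} \<in> G \<longrightarrow> a \<noteq> b \<longrightarrow> (a, b) \<notin> (adj (G - {{a, b}}))\<^sup>*"
    and "F \<subseteq> G" "{a, b} \<in> F" "a \<noteq> b" "(a, b) \<in> (adj (F - {{a, b}}))\<^sup>*"
  moreover have "F - {{a, b}} \<subseteq> G - {{a, b}}" using \<open>F \<subseteq> G\<close> by blast
  ultimately show False by (blast dest: adj_rtrancl_mono)
qed

lemma rtrancl_imp_distinct_path:
  "(x, y) \<in> r\<^sup>* \<Longrightarrow> \<exists>xs. xs \<noteq> [] \<and> hd xs = x \<and> last xs = y \<and> distinct xs \<and>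
     (\<forall>i. Suc i < length xs \<longrightarrow> (xs ! i, xs ! Suc i) \<in> r)"
proof (induction rule: converse_rtrancl_induct)
  case base
  show ?case by (intro exI[of _ "[y]"]) auto
next
  case (step x z)
  then obtain xs where xs: "xs \<noteq> []" "hd xs = z" "last xs = y" "distinct xs"
    "\<forall>i. Suc i < length xs \<longrightarrow> (xs ! i, xs ! Suc i) \<in> r" by blast
  show ?case
  proof (cases "x \<in> set xs")
    case True
    then obtain i where i: "i < length xs" "xs ! i = x" by (auto simp: in_set_conv_nth)
    show ?thesis
    proof (intro exI[of _ "drop i xs"] conjI allI impI)
      fix j assume "Suc j < length (drop i xs)"
      then show "(drop i xs ! j, drop i xs ! Suc j) \<in> r" using xs(5) by simp
    qed (use i xs in \<open>auto simp: hd_drop_conv_nth last_drop\<close>)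
  next
    case False
    show ?thesis
    proof (intro exI[of _ "x # xs"] conjI allI impI)
      fix j assume "Suc j < length (x # xs)"
      then show "((x # xs) ! j, (x # xs) ! Suc j) \<in> r"
        using xs step.hyps(1) by (cases j) (auto simp: hd_conv_nth)
    qed (use xs False in auto)
  qed
qed

lemma forest_if_no_cycle:
  assumes "\<nexists>vs. is_cycle E vs"
  shows "forest E"
  unfolding forest_def
proof (intro allI impI notI)
  fix a b
  assume ab: "{a, b} \<in> E" "a \<noteq> b" and path: "(a, b) \<in> (adj (E - {{a, b}}))\<^sup>*"
  obtain xs where xs: "xs \<noteq> []" "hd xs = a" "last xs = b" "distinct xs"
    and "\<forall>i. Suc i < length xs \<longrightarrow> (xs ! i, xs ! Suc i) \<in> adj (E - {{a, b}})"
    using rtrancl_imp_distinct_path[OF path] by blast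
  then have steps: "\<forall>i. Suc i < length xs \<longrightarrow> {xs ! i, xs ! Suc i} \<in> E - {{a, b}}"
    by simp
  have "length xs \<noteq> 1"
  proof
    assume "length xs = 1"
    then have "hd xs = last xs" by (cases xs) auto
    with xs(2,3) ab(2) show False by simp
  qed
  moreover have "length xs \<noteq> 2"
  proof
    assume "length xs = 2"
    then have "{xs ! 0, xs ! 1} \<in> E - {{a, b}}" "hd xs = xs ! 0" "last xs = xs ! 1"
      using steps xs(1) by (auto simp: hd_conv_nth last_conv_nth)
    then show False using xs(2,3) by simp
  qed
  moreover have "length xs \<noteq> 0" using xs(1) by simp
  ultimately have "length xs \<ge> 3" by linarith
  moreover have "{last xs, hd xs} \<in> E" using xs(2,3) ab(1) by (simp add: insert_commute)
  ultimately have "is_cycle E xs" using xs(4) steps by (simp add: is_cycle_def)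
  with assms show False by blast
qed

lemma fin_graph_edge:
  assumes "fin_graph V E" "e \<in> E"
  shows "card e = 2" "e \<subseteq> V"
  using assms by (auto simp: fin_graph_def)

lemma fin_graph_finite_edges: "fin_graph V E \<Longrightarrow> finite E"
  by (meson fin_graph_def fin_graph_edge(2) finite_Pow_iff finite_subset subsetI PowI)

lemma fin_graph_subgraph:
  assumes "fin_graph V E" "W \<subseteq> V" "F \<subseteq> {e \<in> E. e \<subseteq> W}"
  shows "fin_graph W F"
  using assms unfolding fin_graph_def by (metis (no_types, lifting) finite_subset insert_subset mem_Collect_eq subsetD)

lemma edge_subset_graph_component:
  assumes "g \<in> F" "card g = 2" "g \<inter> graph_component F a \<noteq> {}"
  shows "g \<subseteq> graph_component F a"
proof -
  obtain x y where "g = {x, y}" "x \<in> graph_component F a"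
    using assms(2,3) by (auto simp: card_2_iff insert_commute)
  with assms(1) show ?thesis using graph_component_edge[of x y F a] by simp
qed

lemma connected_forest_Diff_edge:
  assumes "graph_connected W F" "forest F" "{a, b} \<in> F" "a \<noteq> b" "a \<in> W"
  defines "F' \<equiv> F - {{a, b}}"
  shows "W \<subseteq> graph_component F' a \<union> graph_component F' b"
    and "graph_component F' a \<inter> graph_component F' b = {}"
proof
  fix u assume "u \<in> W"
  then have "(a, u) \<in> (adj F)\<^sup>*"
    using assms(1,5) unfolding graph_connected_def by blast
  then show "u \<in> graph_component F' a \<union> graph_component F' b"
    using adj_rtrancl_Diff_edge[of a u F b] by (simp add: graph_component_def F'_def)
next
  have "(a, b) \<notin> (adj F')\<^sup>*"
    using assms(2-4) unfolding forest_def F'_def by blast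
  then show "graph_component F' a \<inter> graph_component F' b = {}"
    unfolding graph_component_def by (blast intro: adj_rtrancl_sym rtrancl_trans)
qed

lemma card_edges_split:
  assumes "finite F" "\<forall>g\<in>F. g \<noteq> {} \<and> (g \<subseteq> A \<or> g \<subseteq> B)" "A \<inter> B = {}"
  shows "card F = card {g \<in> F. g \<subseteq> A} + card {g \<in> F. g \<subseteq> B}"
proof -
  have "F = {g \<in> F. g \<subseteq> A} \<union> {g \<in> F. g \<subseteq> B}" using assms(2) by blast
  moreover have "{g \<in> F. g \<subseteq> A} \<inter> {g \<in> F. g \<subseteq> B} = {}" using assms(2,3) by blast
  ultimately show ?thesis using assms(1) by (metis card_Un_disjoint finite_Un)
qed

lemma card_edges_connected_forest:
  assumes "fin_graph W F" "graph_connected W F" "forest F"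
  shows "card F + 1 = card W"
proof -
  have "finite F" using assms(1) by (rule fin_graph_finite_edges)
  then show ?thesis
    using assms
  proof (induction F arbitrary: W rule: finite_psubset_induct)
    case (psubset F)
    show ?case
    proof (cases "F = {}")
      case True
      with psubset.prems(2) obtain w where "W = {w}"
        unfolding graph_connected_def by auto
      with True show ?thesis by simp
    next
      case False
      then obtain a b where ab: "{a, b} \<in> F" "a \<noteq> b"
        using fin_graph_edge(1)[OF psubset.prems(1)] by (metis card_2_iff ex_in_conv)
      have "a \<in> W" "b \<in> W" using fin_graph_edge(2)[OF psubset.prems(1) ab(1)] by auto
      define F' where "F' = F - {{a, b}}"
      define comp where "comp c = graph_component F' c" for c
      have comp_W: "comp c \<subseteq> W" if "c \<in> W" for c
        unfolding comp_def using fin_graph_edge(2)[OF psubset.prems(1)] that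
        by (intro graph_component_subset) (auto simp: F'_def)
      have card_comp: "card {g \<in> F'. g \<subseteq> comp c} + 1 = card (comp c)" if "c \<in> W" for c
      proof (rule psubset.IH)
        show "{g \<in> F'. g \<subseteq> comp c} \<subset> F" using ab(1) by (auto simp: F'_def)
        show "fin_graph (comp c) {g \<in> F'. g \<subseteq> comp c}"
          using psubset.prems(1) comp_W[OF that] by (rule fin_graph_subgraph) (auto simp: F'_def)
        show "graph_connected (comp c) {g \<in> F'. g \<subseteq> comp c}"
          unfolding comp_def by (rule graph_connected_component)
        show "forest {g \<in> F'. g \<subseteq> comp c}"
          using psubset.prems(3) by (rule forest_subset) (auto simp: F'_def)
      qed
      have W: "W = comp a \<union> comp b" and disjoint: "comp a \<inter> comp b = {}"
        using connected_forest_Diff_edge[OF psubset.prems(2,3) ab \<open>a \<in> W\<close>] comp_W \<open>a \<in> W\<close> \<open>b \<in> W\<close>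
        unfolding comp_def F'_def by blast+
      have "\<forall>g\<in>F'. g \<noteq> {} \<and> (g \<subseteq> comp a \<or> g \<subseteq> comp b)"
      proof
        fix g assume "g \<in> F'"
        then have "card g = 2" "g \<subseteq> W" using fin_graph_edge[OF psubset.prems(1)] by (auto simp: F'_def)
        then show "g \<noteq> {} \<and> (g \<subseteq> comp a \<or> g \<subseteq> comp b)"
          using edge_subset_graph_component[OF \<open>g \<in> F'\<close>] unfolding W comp_def by fastforce
      qed
      then have "card F' = card {g \<in> F'. g \<subseteq> comp a} + card {g \<in> F'. g \<subseteq> comp b}"
        using \<open>finite F\<close> disjoint by (intro card_edges_split) (auto simp: F'_def)
      moreover have "card F = card F' + 1"
        using card_Suc_Diff1[OF \<open>finite F\<close> ab(1)] unfolding F'_def by simp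
      moreover have "card W = card (comp a) + card (comp b)"
      proof -
        have "finite (comp a \<union> comp b)" using psubset.prems(1) W by (simp add: fin_graph_def)
        then show ?thesis using disjoint by (simp add: W card_Un_disjoint)
      qed
      ultimately show ?thesis using card_comp[OF \<open>a \<in> W\<close>] card_comp[OF \<open>b \<in> W\<close>] by simp
    qed
  qed
qed

lemma card_Int_doubleton:
  assumes "card e = 2"
  shows "card (e \<inter> W) = (if e \<subseteq> W then 2 else if e \<inter> W = {} then 0 else 1)"
proof -
  obtain x y where "e = {x, y}" "x \<noteq> y" using assms by (auto simp: card_2_iff)
  then show ?thesis by (cases "x \<in> W"; cases "y \<in> W") (auto simp: Int_insert_left)
qed

lemma sum_valence:
  assumes "finite E" "finite W" "\<forall>e\<in>E. card e = 2"
  shows "(\<Sum>v\<in>W. valence E v) = 2 * card {e \<in> E. e \<subseteq> W} + card {e \<in> E. e \<inter> W \<noteq> {} \<and> \<not> e \<subseteq> W}"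
proof -
  have "(\<Sum>v\<in>W. valence E v) = (\<Sum>v\<in>W. \<Sum>e\<in>E. if v \<in> e then 1 else 0)"
    unfolding valence_def using assms(1) by (simp add: sum.inter_filter[symmetric])
  also have "\<dots> = (\<Sum>e\<in>E. card (e \<inter> W))"
    using assms(2) by (subst sum.swap) (simp add: sum.inter_filter[symmetric] Int_def conj_commute)
  also have "\<dots> = (\<Sum>e\<in>E. 2 * (if e \<subseteq> W then 1 else 0) + (if e \<inter> W \<noteq> {} \<and> \<not> e \<subseteq> W then 1 else 0))"
    using assms(3) by (intro sum.cong) (auto simp: card_Int_doubleton)
  also have "\<dots> = 2 * card {e \<in> E. e \<subseteq> W} + card {e \<in> E. e \<inter> W \<noteq> {} \<and> \<not> e \<subseteq> W}"
    using assms(1) by (simp add: sum.distrib sum.inter_filter[symmetric] flip: sum_distrib_left)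
  finally show ?thesis .
qed

lemma tree_points_Inl [simp]: "Inl v \<in> tree_points V E \<longleftrightarrow> v \<in> V"
  and tree_points_Inr [simp]: "Inr e \<in> tree_points V E \<longleftrightarrow> e \<in> E"
  by (auto simp: tree_points_def)

lemma openin_tree_topology:
  assumes "fin_graph V E"
  shows "openin (tree_topology V E) U \<longleftrightarrow>
    U \<subseteq> tree_points V E \<and> (\<forall>v e. Inl v \<in> U \<longrightarrow> e \<in> E \<longrightarrow> v \<in> e \<longrightarrow> Inr e \<in> U)"
    (is "_ \<longleftrightarrow> ?open U")
proof -
  have "is_subgraph (tree_points V E - U) \<longleftrightarrow>
      (\<forall>v e. Inl v \<in> U \<longrightarrow> e \<in> E \<longrightarrow> v \<in> e \<longrightarrow> Inr e \<in> U)" for U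
    using fin_graph_edge(2)[OF assms] unfolding is_subgraph_def by auto
  then have "(\<lambda>U. U \<subseteq> tree_points V E \<and> is_subgraph (tree_points V E - U)) = ?open"
    by presburger
  moreover have "istopology ?open" unfolding istopology_def by blast
  ultimately show ?thesis by (simp add: tree_topology_def)
qed

lemma topspace_tree_topology:
  assumes "fin_graph V E"
  shows "topspace (tree_topology V E) = tree_points V E"
proof
  show "topspace (tree_topology V E) \<subseteq> tree_points V E"
    using openin_topspace[of "tree_topology V E"] unfolding openin_tree_topology[OF assms] by blast
  show "tree_points V E \<subseteq> topspace (tree_topology V E)"
    by (rule openin_subset) (simp add: openin_tree_topology[OF assms])
qed

lemma closedin_tree_topology_vertex:
  assumes fin: "fin_graph V E" and "closedin (tree_topology V E) C" "Inr e \<in> C" "u \<in> e"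
  shows "Inl u \<in> C"
proof (rule ccontr)
  assume "Inl u \<notin> C"
  have C: "C \<subseteq> tree_points V E" "openin (tree_topology V E) (tree_points V E - C)"
    using assms(2) by (simp_all add: closedin_def topspace_tree_topology[OF fin])
  then have "e \<in> E" using assms(3) by auto
  with assms(4) have "u \<in> V" using fin_graph_edge(2)[OF fin] by blast
  with \<open>Inl u \<notin> C\<close> have "Inl u \<in> tree_points V E - C" by simp
  with C(2) \<open>e \<in> E\<close> assms(4) have "Inr e \<in> tree_points V E - C"
    unfolding openin_tree_topology[OF fin] by blast
  with assms(3) show False by blast
qed

lemma closedin_tree_topology_Inl:
  assumes "fin_graph V E" "v \<in> V"
  shows "closedin (tree_topology V E) {Inl v}"
  using assms by (auto simp: closedin_def topspace_tree_topology openin_tree_topology)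

lemma Inl_notin_branch: "Inl v \<notin> branch V E v e"
  using connected_component_of_subset_topspace unfolding branch_def by fastforce

lemma closedin_insert_branch:
  assumes fin: "fin_graph V E" and "v \<in> V"
  shows "closedin (tree_topology V E) (insert (Inl v) (branch V E v e))"
proof -
  have "closedin (subtopology (tree_topology V E) (tree_points V E - {Inl v})) (branch V E v e)"
    unfolding branch_def by (rule closedin_connected_component_of)
  then obtain C where C: "closedin (tree_topology V E) C"
    and branch: "branch V E v e = C \<inter> (tree_points V E - {Inl v})"
    by (auto simp: closedin_subtopology)
  have "insert (Inl v) (branch V E v e) = C \<union> {Inl v}"
    using closedin_subset[OF C] by (auto simp: branch topspace_tree_topology[OF fin])
  then show ?thesis
    using closedin_Un[OF C closedin_tree_topology_Inl[OF assms]] by simp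
qed

lemma Inl_in_branch:
  assumes fin: "fin_graph V E" and "v \<in> V" "e \<in> E" "u \<in> e" "u \<noteq> v"
  shows "Inl u \<in> branch V E v e"
proof -
  have "Inr e \<in> branch V E v e"
    using assms(3) by (simp add: branch_def connected_component_of_refl topspace_tree_topology[OF fin])
  then have "Inl u \<in> insert (Inl v) (branch V E v e)"
    using closedin_tree_topology_vertex[OF fin closedin_insert_branch[OF fin assms(2)]] assms(4)
    by blast
  with assms(5) show ?thesis by simp
qed

lemma branch_eqI:
  assumes fin: "fin_graph V E" and S: "S \<subseteq> tree_points V E - {Inl v}"
    and "openin (tree_topology V E) S" "closedin (tree_topology V E) (insert (Inl v) S)"
    and "connectedin (tree_topology V E) S" "Inr e \<in> S"
  shows "S = branch V E v e"
proof -
  let ?Y = "subtopology (tree_topology V E) (tree_points V E - {Inl v})"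
  have "connectedin ?Y S" using assms(5) S by (simp add: connectedin_subtopology)
  then have "S \<subseteq> branch V E v e"
    unfolding branch_def using assms(6) by (rule connected_component_of_maximal)
  have "openin ?Y S" using assms(3) S by (rule subset_openin_subtopology)
  moreover have "closedin ?Y S"
    unfolding closedin_subtopology using assms(4) S by (intro exI[of _ "insert (Inl v) S"]) auto
  ultimately have "branch V E v e \<subseteq> S \<or> disjnt (branch V E v e) S"
    unfolding branch_def by (metis connectedin_clopen_cases connectedin_connected_component_of)
  with \<open>S \<subseteq> branch V E v e\<close> assms(6) show ?thesis by (auto simp: disjnt_def)
qed

locale open_connected_subtree =
  fixes V :: "'a set" and E :: "'a set set" and S :: "('a + 'a set) set"
  assumes tree: "is_tree V E"
    and S_subset: "S \<subseteq> tree_points V E"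
    and open_S: "openin (tree_topology V E) S"
    and connected_S: "connectedin (tree_topology V E) S"
begin

definition verts :: "'a set" where
  "verts = {v \<in> V. Inl v \<in> S}"

definition inner_edges :: "'a set set" where
  "inner_edges = {e \<in> E. e \<subseteq> verts}"

definition boundary :: "'a set set" where
  "boundary = {e \<in> E. e \<inter> verts \<noteq> {} \<and> \<not> e \<subseteq> verts}"

lemma fin_graph_VE: "fin_graph V E"
  using tree by (simp add: is_tree_def)

lemma verts_subset: "verts \<subseteq> V"
  by (auto simp: verts_def)

text \<open>Together with \<open>verts_def\<close> this simp rule makes the simplifier loop.\<close>

lemma Inl_in_S_iff [simp]: "Inl v \<in> S \<longleftrightarrow> v \<in> verts"
  using S_subset by (auto simp: verts_def)

lemma Inr_in_S: "v \<in> verts \<Longrightarrow> e \<in> E \<Longrightarrow> v \<in> e \<Longrightarrow> Inr e \<in> S"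
  using open_S by (simp add: openin_tree_topology[OF fin_graph_VE])

lemma S_clopen_cases:
  "openin (tree_topology V E) A \<Longrightarrow> openin (tree_topology V E) (S - A) \<Longrightarrow> S \<subseteq> A \<or> S \<inter> A = {}"
proof (rule ccontr)
  assume "openin (tree_topology V E) A" "openin (tree_topology V E) (S - A)"
    and "\<not> (S \<subseteq> A \<or> S \<inter> A = {})"
  moreover have "S \<subseteq> A \<union> (S - A)" "A \<inter> (S - A) \<inter> S = {}" by auto
  ultimately show False
    using connected_S unfolding connectedin by blast
qed

lemma edge_meets_verts:
  assumes "verts \<noteq> {}" "Inr e \<in> S"
  shows "e \<inter> verts \<noteq> {}"
proof
  assume no_verts: "e \<inter> verts = {}"
  have "e \<in> E" using assms(2) S_subset by auto
  then have "openin (tree_topology V E) {Inr e}" by (simp add: openin_tree_topology[OF fin_graph_VE])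
  moreover have "openin (tree_topology V E) (S - {Inr e})"
    using S_subset Inr_in_S no_verts by (auto simp: openin_tree_topology[OF fin_graph_VE])
  ultimately have "S \<subseteq> {Inr e}" using S_clopen_cases assms(2) by blast
  moreover obtain v where "Inl v \<in> S" using assms(1) by auto
  ultimately show False by blast
qed

lemma graph_connected_verts:
  assumes "w \<in> verts"
  shows "graph_connected verts inner_edges"
proof -
  define C where "C = graph_component inner_edges w"
  \<comment> \<open>Both \<open>A\<close> and \<open>S - A\<close> are open, so connectedness of \<open>S\<close> forces \<open>S \<subseteq> A\<close>.\<close>
  define A where "A = Inl ` C \<union> Inr ` {e \<in> E. e \<inter> C \<noteq> {}}"
  have "C \<subseteq> verts"
    unfolding C_def using assms by (intro graph_component_subset) (auto simp: inner_edges_def)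
  have "openin (tree_topology V E) A"
    using \<open>C \<subseteq> verts\<close> verts_subset by (auto simp: openin_tree_topology[OF fin_graph_VE] A_def)
  moreover have "openin (tree_topology V E) (S - A)"
    unfolding openin_tree_topology[OF fin_graph_VE]
  proof (intro conjI allI impI)
    fix u g assume u: "Inl u \<in> S - A" and "g \<in> E" "u \<in> g"
    have "Inr g \<notin> A"
    proof
      assume "Inr g \<in> A"
      then obtain c where "c \<in> g" "c \<in> C" by (auto simp: A_def)
      moreover have "u \<notin> C" using u by (auto simp: A_def)
      ultimately have "g = {c, u}"
        using fin_graph_edge(1)[OF fin_graph_VE \<open>g \<in> E\<close>] \<open>u \<in> g\<close> by (auto simp: card_2_iff)
      moreover have "g \<in> inner_edges"
        using \<open>g = {c, u}\<close> \<open>c \<in> C\<close> \<open>C \<subseteq> verts\<close> u \<open>g \<in> E\<close> by (auto simp: inner_edges_def)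
      ultimately have "u \<in> C" using \<open>c \<in> C\<close> graph_component_edge unfolding C_def by metis
      with \<open>u \<notin> C\<close> show False ..
    qed
    then show "Inr g \<in> S - A" using u Inr_in_S \<open>g \<in> E\<close> \<open>u \<in> g\<close> by auto
  qed (use S_subset in auto)
  moreover have "w \<in> C" by (simp add: C_def graph_component_def)
  then have "Inl w \<in> S \<inter> A" using assms by (simp add: A_def)
  ultimately have "S \<subseteq> A" using S_clopen_cases by blast
  have "verts \<subseteq> C"
  proof
    fix x assume "x \<in> verts"
    then have "Inl x \<in> A" using \<open>S \<subseteq> A\<close> Inl_in_S_iff[of x] by blast
    then show "x \<in> C" by (auto simp: A_def)
  qed
  with \<open>C \<subseteq> verts\<close> have "C = verts" by blast
  moreover have "{g \<in> inner_edges. g \<subseteq> verts} = inner_edges" by (auto simp: inner_edges_def)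
  ultimately show ?thesis using graph_connected_component[of inner_edges w] by (simp add: C_def)
qed

lemma forest_E: "forest E"
  using tree by (simp add: is_tree_def forest_if_no_cycle)

lemma chi_eq_sum_verts: "chi V E S = (\<Sum>v\<in>verts. chi_v E v)"
  unfolding chi_def verts_def ..

lemma chi_eq_2_minus_card_boundary:
  assumes "w \<in> verts"
  shows "chi V E S = 2 - int (card boundary)"
proof -
  have "fin_graph verts inner_edges"
    using fin_graph_VE verts_subset by (rule fin_graph_subgraph) (simp add: inner_edges_def)
  moreover have "forest inner_edges"
    using forest_E by (rule forest_subset) (simp add: inner_edges_def)
  ultimately have card_verts: "card inner_edges + 1 = card verts"
    using graph_connected_verts[OF assms] card_edges_connected_forest by blast
  have "finite verts" using fin_graph_VE verts_subset by (auto simp: fin_graph_def finite_subset)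
  have "(\<Sum>v\<in>verts. valence E v) = 2 * card inner_edges + card boundary"
    unfolding inner_edges_def boundary_def
    using fin_graph_finite_edges[OF fin_graph_VE] \<open>finite verts\<close> fin_graph_edge(1)[OF fin_graph_VE]
    by (intro sum_valence) auto
  moreover have "chi V E S = (\<Sum>v\<in>verts. 2 - int (valence E v))"
    by (simp add: chi_eq_sum_verts chi_v_def)
  ultimately show ?thesis
    using card_verts by (simp add: sum_subtractf of_nat_sum[symmetric])
qed

lemma boundary_empty_iff:
  assumes "w \<in> verts"
  shows "boundary = {} \<longleftrightarrow> S = tree_points V E"
proof
  assume "boundary = {}"
  have "V \<subseteq> verts"
  proof
    fix x assume "x \<in> V"
    then have "(w, x) \<in> (adj E)\<^sup>*"
      using tree assms verts_subset unfolding is_tree_def graph_connected_def by blast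
    then show "x \<in> verts"
    proof (induction rule: rtrancl_induct)
      case (step y z)
      then have "{y, z} \<in> E" "{y, z} \<inter> verts \<noteq> {}" by auto
      with \<open>boundary = {}\<close> have "{y, z} \<subseteq> verts" by (auto simp: boundary_def)
      then show ?case by simp
    qed (rule assms)
  qed
  show "S = tree_points V E"
  proof
    show "tree_points V E \<subseteq> S"
    proof
      fix x assume "x \<in> tree_points V E"
      then consider v where "x = Inl v" "v \<in> V" | e where "x = Inr e" "e \<in> E"
        by (auto simp: tree_points_def)
      then show "x \<in> S"
      proof cases
        case 1
        with \<open>V \<subseteq> verts\<close> show ?thesis by auto
      next
        case 2
        then obtain v where "v \<in> e"
          using fin_graph_edge(1)[OF fin_graph_VE] by (fastforce simp: card_2_iff)
        with 2 \<open>V \<subseteq> verts\<close> fin_graph_edge(2)[OF fin_graph_VE] show ?thesis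
          using Inr_in_S by blast
      qed
    qed
  qed (rule S_subset)
next
  assume "S = tree_points V E"
  then have "V \<subseteq> verts" using Inl_in_S_iff by fastforce
  then show "boundary = {}" using fin_graph_edge(2)[OF fin_graph_VE] by (auto simp: boundary_def)
qed

lemma boundary_singleton_imp_branch:
  assumes "boundary = {e}"
  shows "is_branch V E S"
proof -
  have "e \<in> E" "e \<inter> verts \<noteq> {}" "\<not> e \<subseteq> verts" using assms by (auto simp: boundary_def)
  then obtain w v where "w \<in> e" "w \<in> verts" "v \<in> e" "v \<notin> verts" by blast
  then have e: "e = {w, v}"
    using fin_graph_edge(1)[OF fin_graph_VE \<open>e \<in> E\<close>] by (auto simp: card_2_iff)
  then have "v \<in> V" using fin_graph_edge(2)[OF fin_graph_VE \<open>e \<in> E\<close>] by simp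
  have "closedin (tree_topology V E) (insert (Inl v) S)"
    unfolding closedin_def topspace_tree_topology[OF fin_graph_VE] openin_tree_topology[OF fin_graph_VE]
  proof (intro conjI allI impI)
    fix u g assume u: "Inl u \<in> tree_points V E - insert (Inl v) S" and "g \<in> E" "u \<in> g"
    have "Inr g \<notin> S"
    proof
      assume "Inr g \<in> S"
      then have "g \<inter> verts \<noteq> {}" using edge_meets_verts \<open>w \<in> verts\<close> by blast
      with u \<open>g \<in> E\<close> \<open>u \<in> g\<close> have "g \<in> boundary" by (auto simp: boundary_def)
      with assms u \<open>u \<in> g\<close> e \<open>w \<in> verts\<close> show False by auto
    qed
    with \<open>g \<in> E\<close> show "Inr g \<in> tree_points V E - insert (Inl v) S" by simp
  qed (use S_subset \<open>v \<in> V\<close> in auto)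
  moreover have "Inr e \<in> S" using Inr_in_S \<open>w \<in> verts\<close> \<open>e \<in> E\<close> e by blast
  moreover have "S \<subseteq> tree_points V E - {Inl v}" using S_subset \<open>v \<notin> verts\<close> by auto
  ultimately have "S = branch V E v e"
    using branch_eqI[OF fin_graph_VE _ open_S _ connected_S] by blast
  moreover have "v \<in> e" using e by simp
  ultimately show ?thesis using \<open>v \<in> V\<close> \<open>e \<in> E\<close> unfolding is_branch_def by blast
qed

lemma branch_imp_boundary_singleton:
  assumes "v \<in> V" "e \<in> E" "v \<in> e" and S: "S = branch V E v e"
  shows "boundary = {e}"
proof -
  obtain w where "w \<in> e" "w \<noteq> v"
    using fin_graph_edge(1)[OF fin_graph_VE \<open>e \<in> E\<close>] by (auto simp: card_2_iff)
  then have e: "e = {w, v}" using fin_graph_edge(1)[OF fin_graph_VE \<open>e \<in> E\<close>] \<open>v \<in> e\<close> by (auto simp: card_2_iff)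
  have "Inl v \<notin> S" unfolding S by (rule Inl_notin_branch)
  then have "v \<notin> verts" by simp
  have "Inl w \<in> S" unfolding S using fin_graph_VE assms(1-2) \<open>w \<in> e\<close> \<open>w \<noteq> v\<close> by (rule Inl_in_branch)
  then have "w \<in> verts" by simp
  have "g = e" if "g \<in> boundary" for g
  proof -
    have "g \<in> E" "g \<inter> verts \<noteq> {}" "\<not> g \<subseteq> verts" using that by (auto simp: boundary_def)
    then obtain a b where "a \<in> g" "a \<in> verts" "b \<in> g" "b \<notin> verts" by blast
    then have g: "g = {a, b}" using fin_graph_edge(1)[OF fin_graph_VE \<open>g \<in> E\<close>] by (auto simp: card_2_iff)
    have "Inr g \<in> S" using Inr_in_S \<open>a \<in> verts\<close> \<open>g \<in> E\<close> \<open>a \<in> g\<close> by blast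
    then have "Inl b \<in> insert (Inl v) S"
      unfolding S using \<open>b \<in> g\<close>
      by (intro closedin_tree_topology_vertex[OF fin_graph_VE closedin_insert_branch[OF fin_graph_VE \<open>v \<in> V\<close>]]) simp_all
    then have "b = v" using \<open>b \<notin> verts\<close> by simp
    show "g = e"
    proof (rule ccontr)
      assume "g \<noteq> e"
      have "inner_edges \<subseteq> E - {e}" using \<open>v \<notin> verts\<close> \<open>v \<in> e\<close> by (auto simp: inner_edges_def)
      moreover have "(w, a) \<in> (adj inner_edges)\<^sup>*"
        using graph_connected_verts[OF \<open>w \<in> verts\<close>] \<open>w \<in> verts\<close> \<open>a \<in> verts\<close>
        unfolding graph_connected_def by blast
      ultimately have "(w, a) \<in> (adj (E - {e}))\<^sup>*" by (rule adj_rtrancl_mono)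
      moreover have "(a, v) \<in> adj (E - {e})" using \<open>g \<in> E\<close> \<open>g \<noteq> e\<close> g \<open>b = v\<close> by simp
      ultimately have "(w, v) \<in> (adj (E - {{w, v}}))\<^sup>*" unfolding e by (rule rtrancl_into_rtrancl)
      with forest_E \<open>e \<in> E\<close> e \<open>w \<noteq> v\<close> show False by (auto simp: forest_def)
    qed
  qed
  moreover have "e \<in> boundary"
    using \<open>e \<in> E\<close> \<open>w \<in> verts\<close> \<open>v \<notin> verts\<close> e by (auto simp: boundary_def)
  ultimately show ?thesis by blast
qed

end

theorem lemma2p9:
  fixes V :: "'a set" and E :: "'a set set" and T' :: "('a + 'a set) set"
  assumes "is_tree V E"
    and "T' \<subseteq> tree_points V E" and "T' \<noteq> {}"
    and "openin (tree_topology V E) T'"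
    and "connectedin (tree_topology V E) T'"
  shows "chi V E T' \<le> 2
    \<and> (chi V E T' = 2 \<longleftrightarrow> T' = tree_points V E)
    \<and> (chi V E T' = 1 \<longleftrightarrow> is_branch V E T')"
proof -
  interpret open_connected_subtree V E T'
    using assms(1,2,4,5) by unfold_locales
  have "finite boundary" using fin_graph_finite_edges[OF fin_graph_VE] by (simp add: boundary_def)
  have branch_iff: "is_branch V E T' \<longleftrightarrow> card boundary = 1"
    using branch_imp_boundary_singleton boundary_singleton_imp_branch
    by (auto simp: is_branch_def card_1_singleton_iff)
  show ?thesis
  proof (cases "verts = {}")
    case True
    moreover obtain v where "v \<in> V" using assms(1) by (auto simp: is_tree_def graph_connected_def)
    ultimately have "T' \<noteq> tree_points V E" using Inl_in_S_iff by fastforce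
    moreover have "boundary = {}" using True by (simp add: boundary_def)
    ultimately show ?thesis using True branch_iff by (simp add: chi_eq_sum_verts)
  next
    case False
    then obtain w where "w \<in> verts" by blast
    then show ?thesis
      using chi_eq_2_minus_card_boundary boundary_empty_iff branch_iff \<open>finite boundary\<close> by auto
  qed
qed

end
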